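(* Let $w\ge 5$ and let $C_1$ be the set of vertices $x=(x_1,\dots,x_{2w})$ of the Johnson graph $J(2w,w)$ such that $(x_1,x_2,x_3,x_4,x_5)\in B$, where $B=\{(0,0,0,0,0),(0,0,1,0,0),(0,0,0,1,0),(0,0,0,0,1),(1,0,1,0,0),(0,1,0,1,0),(0,0,1,0,1),(0,0,0,1,1),(1,1,1,1,1),(1,1,0,1,1),(1,1,1,0,1),(1,1,1,1,0),(0,1,0,1,1),(1,0,1,0,1),(1,1,0,1,0),(1,1,1,0,0)\}$, and let $C_2$ be the complement of $C_1$. Then $(C_1,C_2)$ is an equitable partition with quotient matrix $\begin{pmatrix} w^2-2w & 2w\\ 2w-2 & w^2-2w+2\end{pmatrix}$.
   Context: The Johnson graph $J(n,w)$ has as vertices the binary vectors of length $n$ with exactly $w$ ones; two vertices are adjacent iff they have exactly $w-1$ common ones. A partition $(C_1,C_2)$ of the vertex set is equitable with quotient matrix $S=(s_{ij})$ if every vertex of $C_i$ has exactly $s_{ij}$ neighbours in $C_j$. *)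

theory Defs
  imports Main
begin

text \<open>Vertices of the Johnson graph J(n,w): binary vectors (lists over {0,1})
  of length n with exactly w ones. Coordinates x_1..x_n are list positions 0..n-1.\<close>
definition johnson_vertices :: "nat \<Rightarrow> nat \<Rightarrow> nat list set" where
  "johnson_vertices n w = {x. length x = n \<and> set x \<subseteq> {0,1} \<and> card {i. i < n \<and> x ! i = 1} = w}"

definition johnson_adj :: "nat \<Rightarrow> nat list \<Rightarrow> nat list \<Rightarrow> bool" where
  "johnson_adj w x y \<longleftrightarrow> card {i. i < length x \<and> x ! i = 1 \<and> y ! i = 1} = w - 1"

definition equitable_partition2 ::
  "'a set \<Rightarrow> ('a \<Rightarrow> 'a \<Rightarrow> bool) \<Rightarrow> 'a set \<Rightarrow> 'a set \<Rightarrow> (nat \<Rightarrow> nat \<Rightarrow> nat) \<Rightarrow> bool" where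
  "equitable_partition2 V adj C1 C2 S \<longleftrightarrow>
     C1 \<union> C2 = V \<and> C1 \<inter> C2 = {} \<and>
     (\<forall>i\<in>{1,2}. \<forall>j\<in>{1,2}. \<forall>x\<in>(if i = 1 then C1 else C2).
        card {y \<in> (if j = 1 then C1 else C2). adj x y} = S i j)"

definition B_set :: "nat list set" where
  "B_set = {[0,0,0,0,0],[0,0,1,0,0],[0,0,0,1,0],[0,0,0,0,1],[1,0,1,0,0],[0,1,0,1,0],
            [0,0,1,0,1],[0,0,0,1,1],[1,1,1,1,1],[1,1,0,1,1],[1,1,1,0,1],[1,1,1,1,0],
            [0,1,0,1,1],[1,0,1,0,1],[1,1,0,1,0],[1,1,1,0,0]}"

end

theory Submission
  imports Defs
begin

(*
  A neighbour of x in J(n,w) arises from x by a swap: one 1 at position i becomes 0 and one 0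
  at position j becomes 1, and distinct swaps give distinct neighbours. Sorting the swaps by
  whether i and j lie among the first five coordinates shows that the number of neighbours whose
  first five coordinates lie in a given set depends only on the prefix p = (x_1,...,x_5) and on
  the numbers w - k of ones and w - 5 + k of zeros after it, where k is the number of ones in p.
  This reduces the theorem to a check of the 32 binary prefixes p, each an identity of
  polynomials in w.
*)

definition ones :: "nat list \<Rightarrow> nat set" where
  "ones x = {i. i < length x \<and> x ! i = 1}"

lemma finite_ones [simp]: "finite (ones x)"
  by (simp add: ones_def)

lemma card_ones: "card (ones x) = count_list x 1"
  by (simp add: ones_def count_list_eq_length_filter length_filter_conv_card eq_commute)

lemma mem_johnson_vertices_iff:
  "x \<in> johnson_vertices n w \<longleftrightarrow> length x = n \<and> set x \<subseteq> {0,1} \<and> card (ones x) = w"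
  by (auto simp: johnson_vertices_def ones_def)

lemma johnson_adj_iff:
  assumes "length x = length y"
  shows "johnson_adj w x y \<longleftrightarrow> card (ones x \<inter> ones y) = w - 1"
proof -
  have "{i. i < length x \<and> x ! i = 1 \<and> y ! i = 1} = ones x \<inter> ones y"
    using assms by (auto simp: ones_def)
  then show ?thesis by (simp add: johnson_adj_def)
qed

lemma binary_nth_eq_0_iff:
  fixes x :: "nat list"
  assumes "set x \<subseteq> {0,1}" "k < length x"
  shows "x ! k = 0 \<longleftrightarrow> x ! k \<noteq> 1"
  using nth_mem[OF assms(2)] assms(1) by auto

lemma binary_list_eqI:
  assumes "length x = length y" "set x \<subseteq> {0,1}" "set y \<subseteq> {0,1}" "ones x = ones y"
  shows "x = y"
proof (rule nth_equalityI)
  fix k assume "k < length x"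
  then have "x ! k = 1 \<longleftrightarrow> y ! k = 1"
    using assms by (auto simp: ones_def set_eq_iff)
  then show "x ! k = y ! k"
    using assms \<open>k < length x\<close> binary_nth_eq_0_iff[of x k] binary_nth_eq_0_iff[of y k] by auto
qed (fact assms(1))

lemma ones_swap:
  assumes "i < length x" "j < length x" "x ! i = 1" "x ! j = 0"
  shows "ones (x[i := 0, j := 1]) = insert j (ones x - {i})"
  using assms by (auto simp: ones_def nth_list_update)

lemma swap_in_johnson_vertices:
  assumes x: "x \<in> johnson_vertices n w" and ij: "i < n" "j < n" "x ! i = 1" "x ! j = 0"
  shows "x[i := 0, j := 1] \<in> johnson_vertices n w" and "johnson_adj w x (x[i := 0, j := 1])"
proof -
  have lx: "length x = n" and sx: "set x \<subseteq> {0,1}" and cx: "card (ones x) = w"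
    using x by (auto simp: mem_johnson_vertices_iff)
  have i: "i \<in> ones x" and j: "j \<notin> ones x"
    using ij lx by (auto simp: ones_def)
  have "set (x[i := 0, j := 1]) \<subseteq> {0,1}"
    using sx set_update_subset_insert[of x i 0] set_update_subset_insert[of "x[i:=0]" j 1] by auto
  moreover have "card (ones (x[i := 0, j := 1])) = w"
    using ones_swap[of i x j] ij lx i j cx card_gt_0_iff[of "ones x"] by (auto simp: card_Diff_singleton)
  ultimately show "x[i := 0, j := 1] \<in> johnson_vertices n w"
    using lx by (simp add: mem_johnson_vertices_iff)
  have "ones x \<inter> ones (x[i := 0, j := 1]) = ones x - {i}"
    using ones_swap[of i x j] ij lx j by auto
  then show "johnson_adj w x (x[i := 0, j := 1])"
    using i cx by (simp add: johnson_adj_iff card_Diff_singleton)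
qed

(* For w = 0 the truncated w - 1 would make the single vertex adjacent to itself. *)
lemma johnson_neighbour_is_swap:
  assumes x: "x \<in> johnson_vertices n w" and y: "y \<in> johnson_vertices n w"
    and adj: "johnson_adj w x y" and w: "w \<ge> 1"
  obtains i j where "i < n" "j < n" "x ! i = 1" "x ! j = 0" "y = x[i := 0, j := 1]"
proof -
  have lx: "length x = n" and sx: "set x \<subseteq> {0,1}" and cx: "card (ones x) = w"
    and ly: "length y = n" and sy: "set y \<subseteq> {0,1}" and cy: "card (ones y) = w"
    using x y by (auto simp: mem_johnson_vertices_iff)
  have cxy: "card (ones x \<inter> ones y) = w - 1"
    using adj lx ly by (simp add: johnson_adj_iff)
  have "card (ones x - ones y) = 1"
    using cx cxy w by (simp add: card_Diff_subset_Int)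
  then obtain i where i: "ones x - ones y = {i}" by (auto simp: card_Suc_eq)
  have "card (ones y - ones x) = 1"
    using cy cxy w by (simp add: card_Diff_subset_Int Int_commute)
  then obtain j where j: "ones y - ones x = {j}" by (auto simp: card_Suc_eq)
  have ij: "i < n" "j < n" "x ! i = 1" "x ! j \<noteq> 1"
    using i j lx ly by (auto simp: ones_def set_eq_iff)
  then have xj: "x ! j = 0"
    using sx lx by (simp add: binary_nth_eq_0_iff)
  have "ones y = insert j (ones x - {i})"
    using i j by blast
  then have "ones y = ones (x[i := 0, j := 1])"
    using ones_swap[of i x j] ij xj lx by simp
  moreover have "x[i := 0, j := 1] \<in> johnson_vertices n w"
    using swap_in_johnson_vertices(1)[OF x ij(1,2,3) xj] .
  ultimately have "y = x[i := 0, j := 1]"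
    using ly sy by (intro binary_list_eqI) (auto simp: mem_johnson_vertices_iff)
  with ij xj show thesis by (intro that) auto
qed

lemma inj_on_swap:
  fixes x :: "nat list"
  shows "inj_on (\<lambda>(i, j). x[i := 0, j := 1])
           {(i, j). i < length x \<and> j < length x \<and> x ! i = 1 \<and> x ! j = 0}"
proof (rule inj_onI, clarify)
  fix i j i' j'
  assume ij: "i < length x" "j < length x" "x ! i = 1" "x ! j = 0"
    and ij': "i' < length x" "j' < length x" "x ! i' = 1" "x ! j' = 0"
    and "x[i := 0, j := 1] = x[i' := 0, j' := 1]"
  then have eq: "insert j (ones x - {i}) = insert j' (ones x - {i'})"
    by (metis ones_swap)
  have "i \<in> ones x" "j \<notin> ones x" "i' \<in> ones x" "j' \<notin> ones x"
    using ij ij' by (auto simp: ones_def)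
  then have "j = j'"
    using eq by blast
  then have "ones x - {i} = ones x - {i'}"
    using eq \<open>j \<notin> ones x\<close> by (simp add: insert_ident)
  then show "i = i' \<and> j = j'"
    using \<open>j = j'\<close> \<open>i \<in> ones x\<close> \<open>i' \<in> ones x\<close> by blast
qed

lemma card_johnson_neighbours_eq_card_swaps:
  assumes x: "x \<in> johnson_vertices n w" and w: "w \<ge> 1"
  shows "card {y \<in> johnson_vertices n w. R y \<and> johnson_adj w x y} =
         card {(i, j). i < n \<and> j < n \<and> x ! i = 1 \<and> x ! j = 0 \<and> R (x[i := 0, j := 1])}"
    (is "card ?N = card ?S")
proof -
  have lx: "length x = n" using x by (simp add: mem_johnson_vertices_iff)
  have "?N = (\<lambda>(i, j). x[i := 0, j := 1]) ` ?S"
  proof (intro set_eqI iffI)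
    fix y assume y: "y \<in> ?N"
    then obtain i j where "i < n" "j < n" "x ! i = 1" "x ! j = 0" "y = x[i := 0, j := 1]"
      using johnson_neighbour_is_swap[OF x _ _ w] by blast
    with y show "y \<in> (\<lambda>(i, j). x[i := 0, j := 1]) ` ?S"
      by (intro image_eqI[of _ _ "(i, j)"]) auto
  next
    fix y assume "y \<in> (\<lambda>(i, j). x[i := 0, j := 1]) ` ?S"
    then show "y \<in> ?N"
      using swap_in_johnson_vertices[OF x] by auto
  qed
  moreover have "inj_on (\<lambda>(i, j). x[i := 0, j := 1]) ?S"
    by (rule inj_on_subset[OF inj_on_swap]) (auto simp: lx)
  ultimately show ?thesis by (simp add: card_image)
qed

(*
  swap_count R p a b counts the swaps of a binary word with prefix p, having a ones and b zeros
  after p, that produce a prefix satisfying R. The four summands are the swaps with both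
  positions in the prefix, with only the cleared one, with only the set one, and with neither.
*)
definition prefix_swaps :: "(nat list \<Rightarrow> bool) \<Rightarrow> nat list \<Rightarrow> nat" where
  "prefix_swaps R p = length (filter (\<lambda>(i, j). p ! i = 1 \<and> p ! j = 0 \<and> R (p[i := 0, j := 1]))
     (List.product [0..<length p] [0..<length p]))"

definition prefix_clears :: "(nat list \<Rightarrow> bool) \<Rightarrow> nat list \<Rightarrow> nat" where
  "prefix_clears R p = length (filter (\<lambda>i. p ! i = 1 \<and> R (p[i := 0])) [0..<length p])"

definition prefix_sets :: "(nat list \<Rightarrow> bool) \<Rightarrow> nat list \<Rightarrow> nat" where
  "prefix_sets R p = length (filter (\<lambda>j. p ! j = 0 \<and> R (p[j := 1])) [0..<length p])"

definition swap_count :: "(nat list \<Rightarrow> bool) \<Rightarrow> nat list \<Rightarrow> nat \<Rightarrow> nat \<Rightarrow> nat" where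
  "swap_count R p a b = prefix_swaps R p + prefix_clears R p * b + prefix_sets R p * a
     + (if R p then a * b else 0)"

lemma prefix_swaps_eq_card:
  "prefix_swaps R p =
     card {(i, j). i < length p \<and> j < length p \<and> p ! i = 1 \<and> p ! j = 0 \<and> R (p[i := 0, j := 1])}"
  unfolding prefix_swaps_def
  by (simp add: distinct_length_filter distinct_product) (rule arg_cong[where f = card], auto)

lemma prefix_clears_eq_card: "prefix_clears R p = card {i. i < length p \<and> p ! i = 1 \<and> R (p[i := 0])}"
  unfolding prefix_clears_def
  by (simp add: distinct_length_filter) (rule arg_cong[where f = card], auto)

lemma prefix_sets_eq_card: "prefix_sets R p = card {j. j < length p \<and> p ! j = 0 \<and> R (p[j := 1])}"
  unfolding prefix_sets_def
  by (simp add: distinct_length_filter) (rule arg_cong[where f = card], auto)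

lemma card_indices_drop:
  fixes x :: "'a list"
  shows "card {i. m \<le> i \<and> i < length x \<and> x ! i = a} = count_list (drop m x) a"
proof -
  have "{i. m \<le> i \<and> i < length x \<and> x ! i = a} = (+) m ` {k. k < length (drop m x) \<and> drop m x ! k = a}"
  proof (intro set_eqI iffI)
    fix i assume "i \<in> {i. m \<le> i \<and> i < length x \<and> x ! i = a}"
    then show "i \<in> (+) m ` {k. k < length (drop m x) \<and> drop m x ! k = a}"
      by (intro image_eqI[of _ _ "i - m"]) auto
  qed auto
  then show ?thesis
    by (simp add: card_image count_list_eq_length_filter length_filter_conv_card eq_commute)
qed

lemma swaps_by_prefix_decomposition:
  fixes x :: "nat list"
  assumes m: "m \<le> length x"
  defines "p \<equiv> take m x"
    and "Ones \<equiv> {i. m \<le> i \<and> i < length x \<and> x ! i = 1}"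
    and "Zeros \<equiv> {j. m \<le> j \<and> j < length x \<and> x ! j = 0}"
  shows "{(i, j). i < length x \<and> j < length x \<and> x ! i = 1 \<and> x ! j = 0
             \<and> R (take m (x[i := 0, j := 1]))} =
    {(i, j). i < m \<and> j < m \<and> p ! i = 1 \<and> p ! j = 0 \<and> R (p[i := 0, j := 1])}
    \<union> {i. i < m \<and> p ! i = 1 \<and> R (p[i := 0])} \<times> Zeros
    \<union> Ones \<times> {j. j < m \<and> p ! j = 0 \<and> R (p[j := 1])}
    \<union> (if R p then Ones \<times> Zeros else {})"
    (is "?L = ?U")
proof -
  have lp: "length p = m" using m by (simp add: p_def)
  have nth_p: "p ! i = x ! i" if "i < m" for i
    using that by (simp add: p_def)
  have take_swap: "take m (x[i := 0, j := 1]) = p[i := 0, j := 1]" for i j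
    by (simp add: p_def take_update_swap)
  have update_beyond: "q[j := c] = q" if "length q = m" "m \<le> j" for q :: "nat list" and j c
    using that by (simp add: list_update_beyond)
  have "(i, j) \<in> ?L \<longleftrightarrow> (i, j) \<in> ?U" for i j
    using m unfolding take_swap
    by (cases "i < m"; cases "j < m") (auto simp: Ones_def Zeros_def nth_p update_beyond lp)
  then show ?thesis by auto
qed

lemma card_prefix_swap_union:
  fixes R :: "nat list \<Rightarrow> bool" and p :: "nat list" and Ones Zeros :: "nat set"
  assumes lp: "length p = m" and fin: "finite Ones" "finite Zeros"
    and beyond: "\<forall>i \<in> Ones. m \<le> i" "\<forall>j \<in> Zeros. m \<le> j"
  defines "S \<equiv> {(i, j). i < m \<and> j < m \<and> p ! i = 1 \<and> p ! j = 0 \<and> R (p[i := 0, j := 1])}"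
    and "C \<equiv> {i. i < m \<and> p ! i = 1 \<and> R (p[i := 0])}"
    and "T \<equiv> {j. j < m \<and> p ! j = 0 \<and> R (p[j := 1])}"
  shows "card (S \<union> C \<times> Zeros \<union> Ones \<times> T \<union> (if R p then Ones \<times> Zeros else {})) =
    swap_count R p (card Ones) (card Zeros)"
proof -
  have "finite S" "finite C" "finite T"
    by (auto simp: S_def C_def T_def intro: finite_subset[of _ "{..<m} \<times> {..<m}"])
  moreover have "S \<inter> C \<times> Zeros = {}" "(S \<union> C \<times> Zeros) \<inter> Ones \<times> T = {}"
    "(S \<union> C \<times> Zeros \<union> Ones \<times> T) \<inter> Ones \<times> Zeros = {}"
    using beyond by (auto simp: S_def C_def T_def)
  moreover have "card S = prefix_swaps R p" "card C = prefix_clears R p" "card T = prefix_sets R p"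
    by (simp_all add: S_def C_def T_def lp prefix_swaps_eq_card prefix_clears_eq_card
        prefix_sets_eq_card)
  ultimately show ?thesis
    using fin by (simp add: card_Un_disjoint card_cartesian_product swap_count_def)
qed

lemma card_swaps_by_prefix:
  fixes x :: "nat list"
  assumes m: "m \<le> length x"
  defines "n \<equiv> length x"
  shows "card {(i, j). i < n \<and> j < n \<and> x ! i = 1 \<and> x ! j = 0 \<and> R (take m (x[i := 0, j := 1]))} =
    swap_count R (take m x) (count_list (drop m x) 1) (count_list (drop m x) 0)"
proof -
  define Ones where "Ones = {i. m \<le> i \<and> i < n \<and> x ! i = 1}"
  define Zeros where "Zeros = {j. m \<le> j \<and> j < n \<and> x ! j = 0}"
  have "finite Ones" "finite Zeros"
    by (auto simp: Ones_def Zeros_def intro: finite_subset[of _ "{..<n}"])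
  then have "card {(i, j). i < n \<and> j < n \<and> x ! i = 1 \<and> x ! j = 0 \<and> R (take m (x[i := 0, j := 1]))}
      = swap_count R (take m x) (card Ones) (card Zeros)"
    unfolding swaps_by_prefix_decomposition[OF m] n_def Ones_def Zeros_def
    using m by (intro card_prefix_swap_union) auto
  moreover have "card Ones = count_list (drop m x) 1" "card Zeros = count_list (drop m x) 0"
    by (simp_all add: Ones_def Zeros_def n_def card_indices_drop)
  ultimately show ?thesis by simp
qed

lemma card_johnson_neighbours_by_prefix:
  assumes x: "x \<in> johnson_vertices n w" and w: "w \<ge> 1" and m: "m \<le> n"
  defines "k \<equiv> count_list (take m x) 1"
  shows "card {y \<in> johnson_vertices n w. R (take m y) \<and> johnson_adj w x y} =
         swap_count R (take m x) (w - k) (n - m - (w - k))"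
proof -
  have lx: "length x = n" and sx: "set x \<subseteq> {0,1}" and cx: "count_list x 1 = w"
    using x by (auto simp: mem_johnson_vertices_iff card_ones)
  have ones: "count_list (drop m x) 1 = w - k"
    using cx unfolding k_def by (metis append_take_drop_id count_list_append diff_add_inverse)
  have "count_list (drop m x) 0 + count_list (drop m x) 1 = n - m"
    using sum_count_set[of "drop m x" "{0,1}"] sx lx set_drop_subset[of m x] by simp
  then have zeros: "count_list (drop m x) 0 = n - m - (w - k)"
    using ones by simp
  have "card {y \<in> johnson_vertices n w. R (take m y) \<and> johnson_adj w x y} =
      card {(i, j). i < n \<and> j < n \<and> x ! i = 1 \<and> x ! j = 0 \<and> R (take m (x[i := 0, j := 1]))}"
    by (rule card_johnson_neighbours_eq_card_swaps[OF x w])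
  also have "\<dots> = swap_count R (take m x) (count_list (drop m x) 1) (count_list (drop m x) 0)"
    using card_swaps_by_prefix[of m x R] m lx by simp
  finally show ?thesis
    unfolding ones zeros .
qed

(*
  Here w = v + 5, so a vertex with prefix p has v + 5 - k ones and v + k zeros after p; the
  right-hand sides are the entries of the quotient matrix written in v.
*)
lemma B_set_swap_counts:
  fixes p :: "nat list" and v :: nat
  assumes "length p = 5" "set p \<subseteq> {0,1}"
  defines "k \<equiv> count_list p 1"
  shows "swap_count (\<lambda>q. q \<in> B_set) p (v + 5 - k) (v + k)
           = (if p \<in> B_set then v*v + 8*v + 15 else 2*v + 8) \<and>
         swap_count (\<lambda>q. q \<notin> B_set) p (v + 5 - k) (v + k)
           = (if p \<in> B_set then 2*v + 10 else v*v + 8*v + 17)"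
proof -
  obtain a b c d e where p: "p = [a, b, c, d, e]"
    using assms(1) by (auto simp: numeral_eq_Suc length_Suc_conv)
  with assms(2) have "a \<in> {0,1}" "b \<in> {0,1}" "c \<in> {0,1}" "d \<in> {0,1}" "e \<in> {0,1}"
    by auto
  then show ?thesis
    unfolding k_def p
    by (elim insertE emptyE)
      (simp_all add: swap_count_def prefix_swaps_def prefix_clears_def prefix_sets_def upt_rec
        B_set_def algebra_simps)
qed

lemma card_johnson_neighbours_B_set:
  assumes w: "w \<ge> 5" and x: "x \<in> johnson_vertices (2*w) w"
  shows "card {y \<in> johnson_vertices (2*w) w. take 5 y \<in> B_set \<and> johnson_adj w x y}
           = (if take 5 x \<in> B_set then w^2 - 2*w else 2*w - 2)"
    and "card {y \<in> johnson_vertices (2*w) w. take 5 y \<notin> B_set \<and> johnson_adj w x y}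
           = (if take 5 x \<in> B_set then 2*w else w^2 - 2*w + 2)"
proof -
  obtain v where v: "w = v + 5"
    using w by (metis add.commute le_Suc_ex)
  define p where "p = take 5 x"
  define k where "k = count_list p 1"
  have lp: "length p = 5" and sp: "set p \<subseteq> {0,1}"
    using x w set_take_subset[of 5 x] by (auto simp: p_def mem_johnson_vertices_iff)
  have "k \<le> 5"
    using count_le_length[of p 1] lp by (simp add: k_def)
  then have "w - k = v + 5 - k" "2*w - 5 - (w - k) = v + k"
    using v by simp_all
  then have count: "card {y \<in> johnson_vertices (2*w) w. R (take 5 y) \<and> johnson_adj w x y}
      = swap_count R p (v + 5 - k) (v + k)" for R
    using card_johnson_neighbours_by_prefix[OF x _ _, of 5 R] w by (simp add: p_def k_def)
  have "w^2 - 2*w = v*v + 8*v + 15" "2*w - 2 = 2*v + 8" "2*w = 2*v + 10"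
    "w^2 - 2*w + 2 = v*v + 8*v + 17"
    by (simp_all add: v power2_eq_square algebra_simps)
  with B_set_swap_counts[OF lp sp, of v] show
    "card {y \<in> johnson_vertices (2*w) w. take 5 y \<in> B_set \<and> johnson_adj w x y}
       = (if take 5 x \<in> B_set then w^2 - 2*w else 2*w - 2)"
    "card {y \<in> johnson_vertices (2*w) w. take 5 y \<notin> B_set \<and> johnson_adj w x y}
       = (if take 5 x \<in> B_set then 2*w else w^2 - 2*w + 2)"
    using count[of "\<lambda>q. q \<in> B_set"] count[of "\<lambda>q. q \<notin> B_set"]
    by (simp_all add: p_def k_def)
qed

lemma equitable_partition2_complementI:
  assumes "C \<subseteq> V"
    and "\<And>x. x \<in> C \<Longrightarrow> card {y \<in> C. adj x y} = S 1 1 \<and> card {y \<in> V - C. adj x y} = S 1 2"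
    and "\<And>x. x \<in> V - C \<Longrightarrow> card {y \<in> C. adj x y} = S 2 1 \<and> card {y \<in> V - C. adj x y} = S 2 2"
  shows "equitable_partition2 V adj C (V - C) S"
  using assms unfolding equitable_partition2_def by auto

theorem mainTheorem4:
  fixes w :: nat
  assumes "w \<ge> 5"
  defines "C1 \<equiv> {x \<in> johnson_vertices (2*w) w. take 5 x \<in> B_set}"
  defines "C2 \<equiv> johnson_vertices (2*w) w - C1"
  shows "equitable_partition2 (johnson_vertices (2*w) w) (johnson_adj w) C1 C2
           (\<lambda>i j. if i = 1 \<and> j = 1 then w^2 - 2*w
                  else if i = 1 \<and> j = 2 then 2*w
                  else if i = 2 \<and> j = 1 then 2*w - 2
                  else w^2 - 2*w + 2)"
proof -
  have "{y \<in> C1. johnson_adj w x y} =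
      {y \<in> johnson_vertices (2*w) w. take 5 y \<in> B_set \<and> johnson_adj w x y}"
    "{y \<in> johnson_vertices (2*w) w - C1. johnson_adj w x y} =
      {y \<in> johnson_vertices (2*w) w. take 5 y \<notin> B_set \<and> johnson_adj w x y}" for x
    by (auto simp: C1_def)
  then show ?thesis
    unfolding C2_def
    by (intro equitable_partition2_complementI)
      (auto simp: C1_def card_johnson_neighbours_B_set[OF assms(1)])
qed

end
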